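(* Let $\lambda \geq 0$, $0\leq \beta<1$ and $m \in \mathbb{N}$. Let $f(z)=z+\sum_{k=1}^{\infty} a_{mk+1}z^{mk+1}$ belong to $\Theta_{\Sigma_m}(1,\lambda,0,0;\beta)$ (the case $\tau=1$, $\gamma=\delta=0$). Then $$|a_{m+1}| \leq \min\left\{\frac{2(1-\beta)}{1+m\lambda},\ 2\sqrt{\frac{1-\beta}{(m+1)(1+2m\lambda)}}\right\}\quad\text{and}\quad |a_{2m+1}| \leq \frac{2(1-\beta)}{1+2m\lambda}.$$
   Context: Let $\mathbb{U}=\{z\in\mathbb{C}:|z|<1\}$ and $m\in\mathbb{N}$. $\mathcal{A}_m$ denotes the class of functions analytic in $\mathbb{U}$ of the form $f(z)=z+\sum_{k=1}^{\infty}a_{mk+1}z^{mk+1}$. $\Sigma_m$ denotes the class of $m$-fold symmetric bi-univalent functions: functions $f\in\mathcal{A}_m$ univalent in $\mathbb{U}$ whose inverse $f^{-1}$ extends to a univalent function $g$ on $\mathbb{U}$; this $g$ has the expansion $g(w)=w-a_{m+1}w^{m+1}+\left[(m+1)a_{m+1}^2-a_{2m+1}\right]w^{2m+1}-\cdots$. For $\delta\in\mathbb{N}_0$ and $h(z)=z+\sum_{k\ge1}c_{mk+1}z^{mk+1}$ analytic in $\mathbb{U}$, the $m$-fold Ruscheweyh derivative is $\mathcal{R}^\delta h(z)=z+\sum_{k=1}^{\infty}\frac{\Gamma(\delta+k+1)}{\Gamma(k+1)\Gamma(\delta+1)}c_{mk+1}z^{mk+1}$ (for $\delta=0$ it is the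 identity). For such $h$ and parameters $\lambda,\gamma,\tau\neq0,\delta$, put $$J_h(z)=1+\frac{1}{\tau}\Big[(1-\lambda)(1-\gamma)\frac{\mathcal{R}^\delta h(z)}{z}+(\lambda(\gamma+1)+\gamma)(\mathcal{R}^\delta h)'(z)+\lambda\gamma\big(z(\mathcal{R}^\delta h)''(z)-2\big)-1\Big].$$ For $0\le\beta<1$, $\Theta_{\Sigma_m}(\tau,\lambda,\gamma,\delta;\beta)$ is the set of $f\in\Sigma_m$ such that $\operatorname{Re}J_f(z)>\beta$ for all $z\in\mathbb{U}$ and $\operatorname{Re}J_g(w)>\beta$ for all $w\in\mathbb{U}$, where $g$ is the extension of $f^{-1}$ to $\mathbb{U}$. *)

theory Defs
  imports "HOL-Complex_Analysis.Complex_Analysis"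
begin

definition tcoeff :: "(complex \<Rightarrow> complex) \<Rightarrow> nat \<Rightarrow> complex" where
  "tcoeff h n = (deriv ^^ n) h 0 / of_nat (fact n)"

text \<open>The class A_m: analytic in U, normalised, with only powers z^(mk+1) occurring.\<close>
definition A_m :: "nat \<Rightarrow> (complex \<Rightarrow> complex) set" where
  "A_m m = {f. f holomorphic_on ball 0 1 \<and> tcoeff f 0 = 0 \<and> tcoeff f 1 = 1 \<and>
               (\<forall>n. n mod m \<noteq> 1 mod m \<longrightarrow> tcoeff f n = 0)}"

definition inv_extension :: "(complex \<Rightarrow> complex) \<Rightarrow> (complex \<Rightarrow> complex) \<Rightarrow> bool" where
  "inv_extension f g \<longleftrightarrow> g holomorphic_on ball 0 1 \<and> inj_on g (ball 0 1) \<and>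
     (\<forall>z\<in>ball 0 1. f z \<in> ball 0 1 \<longrightarrow> g (f z) = z)"

definition Sigma_m :: "nat \<Rightarrow> (complex \<Rightarrow> complex) set" where
  "Sigma_m m = {f. f \<in> A_m m \<and> inj_on f (ball 0 1) \<and> (\<exists>g. inv_extension f g)}"

definition ruscheweyh :: "nat \<Rightarrow> nat \<Rightarrow> (complex \<Rightarrow> complex) \<Rightarrow> complex \<Rightarrow> complex" where
  "ruscheweyh m del h z = z + (\<Sum>k. of_nat ((del + Suc k) choose Suc k) * tcoeff h (m * Suc k + 1)
                                  * z ^ (m * Suc k + 1))"

text \<open>q(z) = F(z)/z, with its removable-singularity value F'(0) at z = 0.\<close>
definition divz :: "(complex \<Rightarrow> complex) \<Rightarrow> complex \<Rightarrow> complex" where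
  "divz F z = (if z = 0 then deriv F 0 else F z / z)"

definition J :: "nat \<Rightarrow> complex \<Rightarrow> real \<Rightarrow> real \<Rightarrow> nat \<Rightarrow> (complex \<Rightarrow> complex) \<Rightarrow> complex \<Rightarrow> complex" where
  "J m tau lam gam del h z =
     (let R = ruscheweyh m del h in
      1 + (1 / tau) * ((1 - of_real lam) * (1 - of_real gam) * divz R z
                     + of_real (lam * (gam + 1) + gam) * deriv R z
                     + of_real (lam * gam) * (z * deriv (deriv R) z - 2) - 1))"

definition Theta :: "nat \<Rightarrow> complex \<Rightarrow> real \<Rightarrow> real \<Rightarrow> nat \<Rightarrow> real \<Rightarrow> (complex \<Rightarrow> complex) set" where
  "Theta m tau lam gam del beta = {f. f \<in> Sigma_m m \<and>
      (\<forall>z\<in>ball 0 1. Re (J m tau lam gam del f z) > beta) \<and>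
      (\<forall>g. inv_extension f g \<longrightarrow> (\<forall>w\<in>ball 0 1. Re (J m tau lam gam del g w) > beta))}"

end

theory Submission
  imports Defs
begin

text \<open>For \<open>\<tau> = 1\<close> and \<open>\<gamma> = \<delta> = 0\<close> we have \<open>J_h(z) = (1 - \<lambda>) h(z)/z + \<lambda> h'(z)\<close> (with h
  replaced by its m-fold symmetric part), whose coefficient of order mk is \<open>(1 + mk\<lambda>) a_(mk+1)\<close>.
  Caratheodory's inequality \<open>|p_n| \<le> 2 Re p(0)\<close> for functions of positive real part, applied to
  \<open>J_h - \<beta>\<close>, gives \<open>(1 + mk\<lambda>) |a_(mk+1)| \<le> 2(1 - \<beta>)\<close> both for f and for the inverse g.
  Comparing coefficients in \<open>g \<circ> f = id\<close> yields \<open>b_(2m+1) = (m+1) a_(m+1)^2 - a_(2m+1)\<close>, so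
  \<open>(m+1) |a_(m+1)|^2 \<le> |b_(2m+1)| + |a_(2m+1)| \<le> 4(1 - \<beta>)/(1 + 2m\<lambda>)\<close>.\<close>

unbundle no vec_syntax

section \<open>Caratheodory's coefficient inequality\<close>

lemma has_integral_circlepath_0:
  assumes "(f has_contour_integral I) (circlepath 0 r)"
  shows "((\<lambda>t. f (r * cis (2 * pi * t)) * (r * cis (2 * pi * t))) has_integral I / (2 * pi * \<i>)) {0..1}"
proof -
  have "((\<lambda>t. f (circlepath 0 r t) * vector_derivative (circlepath 0 r) (at t within {0..1}) / (2 * pi * \<i>))
          has_integral I / (2 * pi * \<i>)) {0..1}"
    using has_integral_divide[OF assms[unfolded has_contour_integral_def]] .
  then show ?thesis
  proof (rule has_integral_eq[rotated])
    fix t :: real assume "t \<in> {0..1}"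
    then show "f (circlepath 0 r t) * vector_derivative (circlepath 0 r) (at t within {0..1}) / (2 * pi * \<i>) =
       f (r * cis (2 * pi * t)) * (r * cis (2 * pi * t))"
      by (subst vector_derivative_circlepath01) (auto simp: circlepath cis_conv_exp mult_ac)
  qed
qed

lemma has_integral_circle_Taylor_coeff:
  fixes q :: "complex \<Rightarrow> complex" and r R :: real
  assumes hol: "q holomorphic_on ball 0 R" and r: "0 < r" "r < R"
  shows "((\<lambda>t. q (r * cis (2 * pi * t)) * cnj (cis (2 * pi * t)) ^ n)
           has_integral r ^ n * ((deriv ^^ n) q 0 / fact n)) {0..1}"
proof -
  have sub: "cball 0 r \<subseteq> ball 0 R"
    using r by auto
  have "q holomorphic_on ball 0 r"
    using hol by (rule holomorphic_on_subset) (use r in auto)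
  have "((\<lambda>u. q u / (u - 0) ^ Suc n) has_contour_integral 2 * pi * \<i> / fact n * (deriv ^^ n) q 0)
          (circlepath 0 r)"
    using r sub holomorphic_on_imp_continuous_on[OF hol]
    by (intro Cauchy_has_contour_integral_higher_derivative_circlepath \<open>q holomorphic_on ball 0 r\<close>)
       (auto intro: continuous_on_subset)
  from has_integral_mult_left[OF has_integral_circlepath_0[OF this], of "r ^ n"]
  show ?thesis
    by (rule has_integral_eq_rhs[OF has_integral_eq[rotated]])
       (use r in \<open>auto simp: cis_cnj field_simps simp flip: cis_inverse\<close>)
qed

lemma has_integral_circle_positive_power:
  fixes q :: "complex \<Rightarrow> complex" and r R :: real
  assumes hol: "q holomorphic_on ball 0 R" and r: "0 < r" "r < R" and n: "n \<ge> 1"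
  shows "((\<lambda>t. q (r * cis (2 * pi * t)) * cis (2 * pi * t) ^ n) has_integral 0) {0..1}"
proof -
  have "((\<lambda>u. q u * u ^ (n - 1)) has_contour_integral 0) (circlepath 0 r)"
    using hol r by (intro Cauchy_theorem_convex_simple[where S = "ball 0 R"])
      (auto intro!: holomorphic_intros simp: path_image_circlepath)
  from has_integral_mult_left[OF has_integral_circlepath_0[OF this], of "1 / r ^ n"]
  show ?thesis
    by (rule has_integral_eq_rhs[OF has_integral_eq[rotated]])
       (use r n in \<open>auto simp: field_simps power_mult_distrib simp flip: power_Suc\<close>)
qed

lemma Caratheodory_coeff_bound_on_circle:
  fixes q :: "complex \<Rightarrow> complex"
  assumes hol: "q holomorphic_on ball 0 1" and pos: "\<And>z. z \<in> ball 0 1 \<Longrightarrow> Re (q z) > 0"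
    and n: "n \<ge> 1" and r: "0 < r" "r < 1"
  shows "norm ((deriv ^^ n) q 0 / fact n) * r ^ n \<le> 2 * Re (q 0)"
proof -
  define e where "e t = cis (2 * pi * t)" for t
  define c where "c = (deriv ^^ n) q 0 / fact n"
  have coeff: "((\<lambda>t. q (r * e t) * cnj (e t) ^ n) has_integral r ^ n * c) {0..1}"
    unfolding e_def c_def by (rule has_integral_circle_Taylor_coeff[OF hol r])
  have mean: "((\<lambda>t. q (r * e t)) has_integral q 0) {0..1}"
    using has_integral_circle_Taylor_coeff[OF hol r, of 0] by (simp add: e_def)
  have "(cnj \<circ> (\<lambda>t. q (r * e t) * e t ^ n) has_integral cnj 0) {0..1}"
    unfolding has_integral_cnj e_def by (rule has_integral_circle_positive_power[OF hol r n])
  then have "((\<lambda>t. cnj (q (r * e t)) * cnj (e t) ^ n) has_integral 0) {0..1}"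
    by (simp add: o_def)
  \<comment> \<open>Adding it to the coefficient integral replaces q by q + cnj q = 2 Re q, whose mean is 2 Re (q 0).\<close>
  from has_integral_add[OF coeff this]
  have sum: "((\<lambda>t. of_real (2 * Re (q (r * e t))) * cnj (e t) ^ n) has_integral r ^ n * c) {0..1}"
    by (simp only: complex_add_cnj[symmetric] distrib_right add_0_right)
  have re: "((\<lambda>t. 2 * Re (q (r * e t))) has_integral 2 * Re (q 0)) {0..1}"
    using has_integral_mult_right[OF has_integral_Re[OF mean], of 2] by simp
  have "norm (of_real (2 * Re (q (r * e t))) * cnj (e t) ^ n) \<le> (2 * Re (q (r * e t))) \<bullet> 1" for t
  proof -
    have "r * e t \<in> ball 0 1"
      using r by (simp add: e_def norm_mult)
    then show ?thesis
      using pos[of "r * e t"] by (simp add: e_def norm_mult norm_power)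
  qed
  then have "norm (of_real (r ^ n) * c) \<le> (2 * Re (q 0)) \<bullet> 1"
    by (rule has_integral_norm_bound_integral_component[OF sum re])
  moreover have "norm (of_real (r ^ n) * c) = norm c * r ^ n"
    using r by (simp add: norm_mult norm_power)
  ultimately show ?thesis
    by (simp add: c_def)
qed

lemma Caratheodory_coeff_bound:
  fixes q :: "complex \<Rightarrow> complex"
  assumes hol: "q holomorphic_on ball 0 1" and pos: "\<And>z. z \<in> ball 0 1 \<Longrightarrow> Re (q z) > 0"
    and n: "n \<ge> 1"
  shows "norm ((deriv ^^ n) q 0 / fact n) \<le> 2 * Re (q 0)"
proof -
  let ?c = "norm ((deriv ^^ n) q 0 / fact n)"
  have "eventually (\<lambda>r. r \<in> {0<..<1}) (at_left (1::real))"
    by (rule eventually_at_left_real) simp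
  then have "eventually (\<lambda>r. ?c * r ^ n \<le> 2 * Re (q 0)) (at_left 1)"
    by eventually_elim (use Caratheodory_coeff_bound_on_circle[OF hol pos n] in auto)
  moreover have "((\<lambda>r. ?c * r ^ n) \<longlongrightarrow> ?c * 1 ^ n) (at_left 1)"
    by (intro tendsto_intros)
  ultimately have "?c * 1 ^ n \<le> 2 * Re (q 0)"
    by (intro tendsto_le[OF _ tendsto_const]) auto
  then show ?thesis
    by simp
qed

lemma conv_radius_mono_norm:
  fixes f g :: "nat \<Rightarrow> 'a :: banach"
  assumes "\<And>n. norm (f n) \<le> norm (g n)"
  shows "conv_radius g \<le> conv_radius f"
  unfolding conv_radius_def
proof (rule ereal_inverse_antimono)
  show "0 \<le> limsup (\<lambda>n. ereal (root n (norm (f n))))"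
    by (rule le_Limsup) (simp_all add: real_root_ge_zero)
  show "limsup (\<lambda>n. ereal (root n (norm (f n)))) \<le> limsup (\<lambda>n. ereal (root n (norm (g n))))"
  proof (intro Limsup_mono always_eventually allI)
    fix n
    show "ereal (root n (norm (f n))) \<le> ereal (root n (norm (g n)))"
      using assms[of n] by (cases "n = 0") (simp_all add: real_root_le_mono)
  qed
qed

section \<open>The power series of \<open>J\<close>\<close>

lemma fps_expansion_nth_0: "fps_expansion h 0 $ n = tcoeff h n"
  by (simp add: fps_expansion_def tcoeff_def)

text \<open>The power series of \<open>ruscheweyh m 0 h\<close>. The filter on the coefficients cannot be dropped:
  it is also applied to the inverse g, which is not assumed m-fold symmetric.\<close>

definition msym_tail_fps :: "nat \<Rightarrow> (complex \<Rightarrow> complex) \<Rightarrow> complex fps" where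
  "msym_tail_fps m h = Abs_fps (\<lambda>n. if \<exists>k. n = m * Suc k + 1 then tcoeff h n else 0)"

definition ruscheweyh0_fps :: "nat \<Rightarrow> (complex \<Rightarrow> complex) \<Rightarrow> complex fps" where
  "ruscheweyh0_fps m h = fps_X + msym_tail_fps m h"

lemma fps_conv_radius_msym_tail_fps:
  assumes "h holomorphic_on ball 0 1"
  shows "fps_conv_radius (msym_tail_fps m h) \<ge> 1"
proof -
  have "1 \<le> fps_conv_radius (fps_expansion h 0)"
    using assms by (intro conv_radius_fps_expansion) auto
  also have "\<dots> \<le> fps_conv_radius (msym_tail_fps m h)"
    unfolding fps_conv_radius_def
    by (rule conv_radius_mono_norm) (simp add: msym_tail_fps_def fps_expansion_nth_0)
  finally show ?thesis .
qed

lemma fps_conv_radius_ruscheweyh0_fps: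
  assumes "h holomorphic_on ball 0 1"
  shows "fps_conv_radius (ruscheweyh0_fps m h) \<ge> 1"
proof -
  have "fps_conv_radius (msym_tail_fps m h) \<le> fps_conv_radius (ruscheweyh0_fps m h)"
    using fps_conv_radius_add[of fps_X "msym_tail_fps m h"] by (simp add: ruscheweyh0_fps_def)
  with fps_conv_radius_msym_tail_fps[OF assms] show ?thesis
    by (rule order_trans)
qed

lemma ruscheweyh0_fps_nth_0 [simp]: "ruscheweyh0_fps m h $ 0 = 0"
  by (simp add: ruscheweyh0_fps_def msym_tail_fps_def)

lemma ruscheweyh0_fps_nth_1: "m \<ge> 1 \<Longrightarrow> ruscheweyh0_fps m h $ 1 = 1"
  by (simp add: ruscheweyh0_fps_def msym_tail_fps_def)

lemma ruscheweyh0_fps_nth: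
  assumes "m \<ge> 1" "k \<ge> 1"
  shows "ruscheweyh0_fps m h $ (m * k + 1) = tcoeff h (m * k + 1)"
proof -
  obtain j where "k = Suc j"
    using assms(2) by (cases k) auto
  then show ?thesis
    using assms(1) by (auto simp: ruscheweyh0_fps_def msym_tail_fps_def)
qed

lemma ruscheweyh_0_eq_eval_fps:
  assumes m: "m \<ge> 1" and hol: "h holomorphic_on ball 0 1" and z: "z \<in> ball 0 1"
  shows "ruscheweyh m 0 h z = eval_fps (ruscheweyh0_fps m h) z"
proof -
  let ?T = "msym_tail_fps m h"
  have "ereal (norm z) < 1"
    using z by simp
  then have rz: "ereal (norm z) < fps_conv_radius ?T"
    using fps_conv_radius_msym_tail_fps[OF hol] by (rule order.strict_trans2)
  have "strict_mono (\<lambda>k. m * Suc k + 1)"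
    using m by (auto simp: strict_mono_def)
  then have "(\<lambda>k. ?T $ (m * Suc k + 1) * z ^ (m * Suc k + 1)) sums eval_fps ?T z"
    using sums_eval_fps[OF rz] by (subst sums_mono_reindex) (auto simp: msym_tail_fps_def)
  then have "ruscheweyh m 0 h z = z + eval_fps ?T z"
    unfolding ruscheweyh_def by (simp add: msym_tail_fps_def sums_iff)
  also have "\<dots> = eval_fps (ruscheweyh0_fps m h) z"
    unfolding ruscheweyh0_fps_def using rz by (subst eval_fps_add) auto
  finally show ?thesis .
qed

definition J_fps :: "nat \<Rightarrow> real \<Rightarrow> (complex \<Rightarrow> complex) \<Rightarrow> complex fps" where
  "J_fps m lam h = fps_const (1 - of_real lam) * fps_shift 1 (ruscheweyh0_fps m h)
                   + fps_const (of_real lam) * fps_deriv (ruscheweyh0_fps m h)"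

lemma J_fps_nth: "J_fps m lam h $ n = (1 + of_nat n * of_real lam) * ruscheweyh0_fps m h $ (n + 1)"
  by (simp add: J_fps_def algebra_simps)

lemma J_fps_nth_0: "m \<ge> 1 \<Longrightarrow> J_fps m lam h $ 0 = 1"
  using ruscheweyh0_fps_nth_1[of m h] by (simp add: J_fps_nth)

lemma fps_conv_radius_J_fps:
  assumes "h holomorphic_on ball 0 1"
  shows "fps_conv_radius (J_fps m lam h) \<ge> 1"
proof -
  let ?R = "ruscheweyh0_fps m h"
  have R: "fps_conv_radius ?R \<ge> 1"
    by (rule fps_conv_radius_ruscheweyh0_fps[OF assms])
  then have D: "fps_conv_radius (fps_deriv ?R) \<ge> 1"
    using fps_conv_radius_deriv order_trans by blast
  have "fps_conv_radius (fps_const c * fps_shift 1 ?R) \<ge> 1" for c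
    using fps_conv_radius_mult[of "fps_const c" "fps_shift 1 ?R"] R by (simp add: order_trans)
  moreover have "fps_conv_radius (fps_const c * fps_deriv ?R) \<ge> 1" for c
    using fps_conv_radius_mult[of "fps_const c" "fps_deriv ?R"] D by (simp add: order_trans)
  ultimately show ?thesis
    using fps_conv_radius_add unfolding J_fps_def by (metis min.boundedI order_trans)
qed

lemma J_eq_eval_J_fps:
  assumes m: "m \<ge> 1" and hol: "h holomorphic_on ball 0 1" and z: "z \<in> ball 0 1"
  shows "J m 1 lam 0 0 h z = eval_fps (J_fps m lam h) z"
proof -
  let ?R = "ruscheweyh m 0 h" and ?E = "ruscheweyh0_fps m h"
  have "ereal (norm z) < 1"
    using z by simp
  then have rE: "ereal (norm z) < fps_conv_radius ?E"
    using fps_conv_radius_ruscheweyh0_fps[OF hol] by (rule order.strict_trans2)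
  have rD: "ereal (norm z) < fps_conv_radius (fps_deriv ?E)"
    using rE fps_conv_radius_deriv order.strict_trans2 by blast
  have "eventually (\<lambda>w. w \<in> ball 0 1) (nhds z)"
    using z by (intro eventually_nhds_in_open) auto
  then have "eventually (\<lambda>w. ?R w = eval_fps ?E w) (nhds z)"
    by eventually_elim (rule ruscheweyh_0_eq_eval_fps[OF m hol])
  then have dR: "deriv ?R z = eval_fps (fps_deriv ?E) z"
    using deriv_cong_ev[OF _ refl] eval_fps_deriv[OF rE] by simp
  have "?E \<noteq> 0"
    using ruscheweyh0_fps_nth_1[OF m] by (metis fps_zero_nth zero_neq_one)
  then have "subdegree ?E \<ge> 1"
    by (intro subdegree_geI) simp_all
  then have divz: "divz ?R z = eval_fps (fps_shift 1 ?E) z"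
    using eval_fps_shift[OF _ rE] dR ruscheweyh_0_eq_eval_fps[OF m hol z]
    by (cases "z = 0") (simp_all add: divz_def eval_fps_at_0)
  have rS: "ereal (norm z) < fps_conv_radius (fps_shift 1 ?E)"
    using rE by simp
  have "eval_fps (J_fps m lam h) z
          = (1 - of_real lam) * eval_fps (fps_shift 1 ?E) z + of_real lam * eval_fps (fps_deriv ?E) z"
    unfolding J_fps_def
    using fps_conv_radius_mult[of "fps_const (1 - of_real lam)" "fps_shift 1 ?E"]
      fps_conv_radius_mult[of "fps_const (of_real lam)" "fps_deriv ?E"] rS rD
    by (subst eval_fps_add) (auto intro: order.strict_trans2 simp: eval_fps_mult)
  then show ?thesis
    using divz dR by (simp add: J_def Let_def)
qed

lemma fps_nth_bound_if_Re_gt: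
  fixes P :: "complex fps"
  assumes rP: "fps_conv_radius P \<ge> 1" and pos: "\<forall>z\<in>ball 0 1. Re (eval_fps P z) > beta"
    and n: "n \<ge> 1"
  shows "norm (P $ n) \<le> 2 * (Re (P $ 0) - beta)"
proof -
  define Q where "Q = P - fps_const (of_real beta)"
  have rQ: "fps_conv_radius Q \<ge> 1"
    using fps_conv_radius_diff[of P "fps_const (of_real beta)"] rP
    unfolding Q_def by (simp add: order_trans)
  have evQ: "eval_fps Q z = eval_fps P z - of_real beta" if "z \<in> ball 0 1" for z
  proof -
    have "ereal (norm z) < 1"
      using that by simp
    then have "ereal (norm z) < fps_conv_radius P"
      using rP by (rule order.strict_trans2)
    then show ?thesis
      unfolding Q_def by (subst eval_fps_diff) auto
  qed
  have "eval_fps Q holomorphic_on ball 0 1"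
    using rQ by (intro holomorphic_on_eval_fps ball_eball_mono) (simp add: one_ereal_def)
  moreover have "Re (eval_fps Q z) > 0" if "z \<in> ball 0 1" for z
    using pos evQ[OF that] that by simp
  ultimately have "norm ((deriv ^^ n) (eval_fps Q) 0 / fact n) \<le> 2 * Re (eval_fps Q 0)"
    using n by (rule Caratheodory_coeff_bound)
  moreover have "Q $ n = (deriv ^^ n) (eval_fps Q) 0 / fact n"
    using less_le_trans[OF _ rQ, of 0] by (intro fps_nth_conv_deriv) simp
  ultimately show ?thesis
    using n by (simp add: Q_def eval_fps_at_0)
qed

lemma tcoeff_bound_if_Re_J_gt:
  assumes m: "m \<ge> 1" and lam: "lam \<ge> 0" and hol: "h holomorphic_on ball 0 1"
    and pos: "\<forall>z\<in>ball 0 1. Re (J m 1 lam 0 0 h z) > beta" and k: "k \<ge> 1"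
  shows "norm (tcoeff h (m * k + 1)) \<le> 2 * (1 - beta) / (1 + k * m * lam)"
proof -
  have "\<forall>z\<in>ball 0 1. Re (eval_fps (J_fps m lam h) z) > beta"
    using pos J_eq_eval_J_fps[OF m hol] by simp
  from fps_nth_bound_if_Re_gt[OF fps_conv_radius_J_fps[OF hol] this, of "m * k"]
  have "norm (J_fps m lam h $ (m * k)) \<le> 2 * (1 - beta)"
    using m k by (simp only: J_fps_nth_0[OF m]) simp
  also have "J_fps m lam h $ (m * k) = of_real (1 + k * m * lam) * tcoeff h (m * k + 1)"
    by (simp only: J_fps_nth ruscheweyh0_fps_nth[OF m k]) (simp add: mult_ac)
  also have "norm (of_real (1 + k * m * lam) * tcoeff h (m * k + 1)) = (1 + k * m * lam) * norm (tcoeff h (m * k + 1))"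
    using lam by (simp only: norm_mult norm_of_real) simp
  finally have "(1 + k * m * lam) * norm (tcoeff h (m * k + 1)) \<le> 2 * (1 - beta)" .
  moreover have "1 + k * m * lam > 0"
    using lam by (simp add: add_pos_nonneg)
  ultimately show ?thesis
    by (simp add: pos_le_divide_eq mult.commute)
qed

section \<open>The coefficient of order 2m+1 of the inverse\<close>

lemma power_add_first_order:
  fixes x w :: "'a :: comm_semiring_1"
  shows "\<exists>Q. (x + w) ^ i = x ^ i + of_nat i * x ^ (i - 1) * w + w\<^sup>2 * Q"
proof (induction i)
  case 0
  show ?case
    by (intro exI[of _ 0]) simp
next
  case (Suc i)
  then obtain Q where Q: "(x + w) ^ i = x ^ i + of_nat i * x ^ (i - 1) * w + w\<^sup>2 * Q"
    by blast
  have xx: "x * (of_nat i * x ^ (i - 1)) = of_nat i * x ^ i"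
    by (cases i) (auto simp: algebra_simps)
  have "(x + w) ^ Suc i = (x + w) * (x ^ i + of_nat i * x ^ (i - 1) * w + w\<^sup>2 * Q)"
    by (simp only: power_Suc Q)
  also have "\<dots> = x ^ Suc i + x * (of_nat i * x ^ (i - 1)) * w + x ^ i * w
                    + w\<^sup>2 * (x * Q + of_nat i * x ^ (i - 1) + w * Q)"
    by (simp add: algebra_simps power2_eq_square)
  also have "\<dots> = x ^ Suc i + of_nat (Suc i) * x ^ (Suc i - 1) * w
                    + w\<^sup>2 * (x * Q + of_nat i * x ^ (i - 1) + w * Q)"
    by (simp only: xx) (simp add: algebra_simps)
  finally show ?case
    by blast
qed

lemma fps_nth_power_X_plus:
  fixes V :: "'a :: comm_semiring_1 fps"
  assumes n: "n \<le> 2 * m + 1"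
  shows "((fps_X + fps_X ^ (m + 1) * V) ^ i) $ n
           = (if n = i then 1 else 0) + of_nat i * (if n < i + m then 0 else V $ (n - i - m))"
proof -
  obtain Q where Q: "(fps_X + fps_X ^ (m + 1) * V) ^ i
      = fps_X ^ i + of_nat i * fps_X ^ (i - 1) * (fps_X ^ (m + 1) * V) + (fps_X ^ (m + 1) * V)\<^sup>2 * Q"
    using power_add_first_order by blast
  have "(fps_X ^ (m + 1) * V)\<^sup>2 * Q = (fps_X ^ (m + 1))\<^sup>2 * (V\<^sup>2 * Q)"
    by (simp only: power_mult_distrib mult.assoc)
  also have "(fps_X ^ (m + 1))\<^sup>2 = (fps_X :: 'a fps) ^ (2 * m + 2)"
    by (simp only: power_mult[symmetric]) (simp add: algebra_simps)
  finally have quadratic: "((fps_X ^ (m + 1) * V)\<^sup>2 * Q) $ n = 0"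
    using n by (simp only: fps_X_power_mult_nth) simp
  have "(of_nat i * fps_X ^ (i - 1) * (fps_X ^ (m + 1) * V)) $ n
          = of_nat i * (if n < i + m then 0 else V $ (n - i - m))"
  proof (cases i)
    case (Suc j)
    then have "of_nat i * fps_X ^ (i - 1) * (fps_X ^ (m + 1) * V) = of_nat i * (fps_X ^ (i + m) * V)"
      by (simp add: power_add algebra_simps)
    then show ?thesis
      by (simp only: fps_mult_of_nat_nth fps_X_power_mult_nth) simp
  qed simp
  then show ?thesis
    using Q quadratic by simp
qed

lemma fps_compose_X_plus_nth:
  fixes G V :: "'a :: comm_semiring_1 fps"
  assumes "n \<le> 2 * m + 1"
  shows "(G oo (fps_X + fps_X ^ (m + 1) * V)) $ n
           = G $ n + (\<Sum>i=0..n. of_nat i * G $ i * (if n < i + m then 0 else V $ (n - i - m)))"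
proof -
  have "(G oo (fps_X + fps_X ^ (m + 1) * V)) $ n
      = (\<Sum>i=0..n. (if n = i then G $ i else 0)
                    + of_nat i * G $ i * (if n < i + m then 0 else V $ (n - i - m)))"
    unfolding fps_compose_nth fps_nth_power_X_plus[OF assms]
    by (intro sum.cong) (simp_all add: algebra_simps)
  then show ?thesis
    by (simp add: sum.distrib)
qed

lemma fps_compose_inverse_nth:
  fixes G V :: "'a :: comm_ring_1 fps"
  assumes comp: "G oo (fps_X + fps_X ^ (m + 1) * V) = fps_X" and m: "m \<ge> 1"
    and gap: "\<And>j. 0 < j \<Longrightarrow> j < m \<Longrightarrow> V $ j = 0"
  shows "G $ (2 * m + 1) = of_nat (m + 1) * (V $ 0)\<^sup>2 - V $ m"
proof -
  define T where "T n i = of_nat i * G $ i * (if n < i + m then 0 else V $ (n - i - m))" for n i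
  have X: "fps_X $ n = G $ n + (\<Sum>i=0..n. T n i)" if "n \<le> 2 * m + 1" for n
    using fps_compose_X_plus_nth[OF that, of G V] by (simp only: comp T_def)
  have "(\<Sum>i=0..1. T 1 i) = 0"
    using m by (simp add: T_def)
  then have G1: "G $ 1 = 1"
    using X[of 1] by simp
  have "(\<Sum>i=0..m+1. T (m + 1) i) = (\<Sum>i\<in>{1}. T (m + 1) i)"
    by (rule sum.mono_neutral_right) (use m in \<open>auto simp: T_def linorder_not_less le_Suc_eq\<close>)
  then have Gm: "G $ (m + 1) = - V $ 0"
    using X[of "m + 1"] m G1 by (simp add: T_def eq_neg_iff_add_eq_0 add.commute)
  have "(\<Sum>i=0..2*m+1. T (2 * m + 1) i) = (\<Sum>i\<in>{1, m + 1}. T (2 * m + 1) i)"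
  proof (rule sum.mono_neutral_right)
    show "\<forall>i\<in>{0..2 * m + 1} - {1, m + 1}. T (2 * m + 1) i = 0"
    proof
      fix i assume i: "i \<in> {0..2 * m + 1} - {1, m + 1}"
      show "T (2 * m + 1) i = 0"
      proof (cases "i = 0 \<or> 2 * m + 1 < i + m")
        case False
        then have "V $ (2 * m + 1 - i - m) = 0"
          using i by (intro gap) auto
        then show ?thesis
          by (simp add: T_def)
      qed (auto simp: T_def)
    qed
  qed (use m in auto)
  also have "\<dots> = V $ m - of_nat (m + 1) * (V $ 0)\<^sup>2"
    using m G1 Gm by (simp add: T_def power2_eq_square algebra_simps)
  finally have "fps_X $ (2 * m + 1) = G $ (2 * m + 1) + (V $ m - of_nat (m + 1) * (V $ 0)\<^sup>2)"
    using X[of "2 * m + 1"] by simp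
  then show ?thesis
    using m by (simp add: algebra_simps)
qed

lemma mod_neq_1_mod:
  fixes m n :: nat
  assumes "2 \<le> n" "n \<le> 2 * m" "n \<noteq> m + 1"
  shows "n mod m \<noteq> 1 mod m"
proof
  assume eq: "n mod m = 1 mod m"
  have "m \<ge> 2"
    using assms by auto
  then have "n = m * (n div m) + 1"
    using eq div_mult_mod_eq[of n m] by (simp add: mult.commute)
  moreover have "n div m \<le> 2"
    using div_le_mono[OF assms(2), of m] \<open>m \<ge> 2\<close> by simp
  ultimately show False
    using assms \<open>m \<ge> 2\<close> by (auto simp: le_Suc_eq numeral_2_eq_2)
qed

lemma A_m_fps_expansion:
  assumes m: "m \<ge> 1" and f: "f \<in> A_m m"
  defines "F \<equiv> fps_expansion f 0"
  shows "F = fps_X + fps_X ^ (m + 1) * fps_shift (m + 1) F"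
proof (rule fps_ext)
  fix n
  have "F $ n = 0" if "n \<noteq> 1" "n \<le> m"
  proof (cases "n = 0")
    case False
    with that m have "n mod m \<noteq> 1 mod m"
      by (intro mod_neq_1_mod) auto
    then show ?thesis
      using f by (simp add: F_def fps_expansion_nth_0 A_m_def)
  qed (use f in \<open>simp add: F_def fps_expansion_nth_0 A_m_def\<close>)
  moreover have "F $ 1 = 1"
    using f by (simp add: F_def fps_expansion_nth_0 A_m_def)
  ultimately show "F $ n = (fps_X + fps_X ^ (m + 1) * fps_shift (m + 1) F) $ n"
    using m by (auto simp: fps_X_power_mult_nth fps_X_nth simp del: power_Suc)
qed

lemma fps_expansion_inverse_compose:
  assumes holf: "f holomorphic_on ball 0 1" and f0: "f 0 = 0" and inv: "inv_extension f g"
  shows "fps_expansion g 0 oo fps_expansion f 0 = fps_X"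
proof -
  have holg: "g holomorphic_on ball 0 1"
    using inv by (simp add: inv_extension_def)
  have expansion: "(g \<circ> f) has_fps_expansion (fps_expansion g 0 oo fps_expansion f 0)"
    using holf holg f0
    by (intro has_fps_expansion_compose has_fps_expansion_fps_expansion[OF open_ball])
       (auto simp: fps_expansion_def)
  have "open (ball 0 1 \<inter> f -` ball 0 1)"
    using holomorphic_on_imp_continuous_on[OF holf] by (intro continuous_open_preimage) auto
  then have "eventually (\<lambda>z. z \<in> ball 0 1 \<inter> f -` ball 0 1) (nhds 0)"
    using f0 by (intro eventually_nhds_in_open) auto
  then have id_near_0: "eventually (\<lambda>z. (g \<circ> f) z = z) (nhds 0)"
    by eventually_elim (use inv in \<open>auto simp: inv_extension_def\<close>)
  have "(\<lambda>z. z) has_fps_expansion (fps_expansion g 0 oo fps_expansion f 0)"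
    using expansion has_fps_expansion_cong[OF id_near_0 refl] by simp
  then show ?thesis
    using fps_expansion_unique_complex has_fps_expansion_fps_X by blast
qed

lemma inv_extension_tcoeff:
  assumes m: "m \<ge> 1" and f: "f \<in> A_m m" and inv: "inv_extension f g"
  shows "tcoeff g (2 * m + 1) = of_nat (m + 1) * (tcoeff f (m + 1))\<^sup>2 - tcoeff f (2 * m + 1)"
proof -
  define F where "F = fps_expansion f 0"
  define V where "V = fps_shift (m + 1) F"
  have "f holomorphic_on ball 0 1" "f 0 = 0"
    using f by (simp_all add: A_m_def tcoeff_def)
  then have comp: "fps_expansion g 0 oo (fps_X + fps_X ^ (m + 1) * V) = fps_X"
    using fps_expansion_inverse_compose[OF _ _ inv] A_m_fps_expansion[OF m f]
    by (simp add: F_def V_def)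
  have gap: "V $ j = 0" if "0 < j" "j < m" for j
  proof -
    have "(j + (m + 1)) mod m \<noteq> 1 mod m"
      using that by (intro mod_neq_1_mod) auto
    then show ?thesis
      using f by (simp add: V_def F_def fps_expansion_nth_0 A_m_def)
  qed
  from fps_compose_inverse_nth[OF comp m gap] show ?thesis
    by (simp add: V_def F_def fps_expansion_nth_0 mult_2 add_ac)
qed

lemma le_2_sqrt_if_square_le:
  fixes x y :: real
  assumes "x\<^sup>2 \<le> 4 * y"
  shows "x \<le> 2 * sqrt y"
proof -
  have "x \<le> sqrt (4 * y)"
    using assms by (rule real_le_rsqrt)
  then show ?thesis
    by (simp add: real_sqrt_mult real_sqrt_four)
qed

theorem corollary3:
  fixes m :: nat and lam beta :: real and f :: "complex \<Rightarrow> complex"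
  assumes "m \<ge> 1" and "lam \<ge> 0" and "0 \<le> beta" and "beta < 1"
    and "f \<in> Theta m 1 lam 0 0 beta"
  shows "norm (tcoeff f (m + 1)) \<le>
           min (2 * (1 - beta) / (1 + m * lam))
               (2 * sqrt ((1 - beta) / ((m + 1) * (1 + 2 * m * lam)))) \<and>
         norm (tcoeff f (2 * m + 1)) \<le> 2 * (1 - beta) / (1 + 2 * m * lam)"
proof -
  note m = assms(1) and lam = assms(2)
  obtain g where f: "f \<in> A_m m" and inv: "inv_extension f g"
    and posf: "\<forall>z\<in>ball 0 1. Re (J m 1 lam 0 0 f z) > beta"
    and posg: "\<forall>w\<in>ball 0 1. Re (J m 1 lam 0 0 g w) > beta"
    using assms(5) by (auto simp: Theta_def Sigma_m_def)
  have holf: "f holomorphic_on ball 0 1" and holg: "g holomorphic_on ball 0 1"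
    using f inv by (simp_all add: A_m_def inv_extension_def)
  let ?a = "tcoeff f (m + 1)" and ?c = "tcoeff f (2 * m + 1)" and ?b = "tcoeff g (2 * m + 1)"
  have a: "norm ?a \<le> 2 * (1 - beta) / (1 + m * lam)"
    using tcoeff_bound_if_Re_J_gt[OF m lam holf posf, of 1] by simp
  have c: "norm ?c \<le> 2 * (1 - beta) / (1 + 2 * m * lam)"
    using tcoeff_bound_if_Re_J_gt[OF m lam holf posf, of 2] by (simp add: mult.commute)
  have b: "norm ?b \<le> 2 * (1 - beta) / (1 + 2 * m * lam)"
    using tcoeff_bound_if_Re_J_gt[OF m lam holg posg, of 2] by (simp add: mult.commute)
  have "?b + ?c = of_nat (m + 1) * ?a ^ 2"
    using inv_extension_tcoeff[OF m f inv] by simp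
  then have "(m + 1) * norm ?a ^ 2 = norm (?b + ?c)"
    by (simp only: norm_mult norm_power norm_of_nat)
  also have "\<dots> \<le> norm ?b + norm ?c"
    by (rule norm_triangle_ineq)
  also have "\<dots> \<le> 2 * (2 * (1 - beta) / (1 + 2 * m * lam))"
    using add_mono[OF b c] by (simp only: mult_2[of "_ / _"])
  finally have "norm ?a ^ 2 \<le> 4 * ((1 - beta) / ((m + 1) * (1 + 2 * m * lam)))"
    using lam by (simp add: field_simps add_pos_nonneg)
  then show ?thesis
    using a c le_2_sqrt_if_square_le by simp
qed

end
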